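(* Let $n \ge 1$, let $\mathbf{D}=(d_{ij})_{i,j=1}^n$ be a symmetric matrix of pairwise distances with $d_{ij}\ge 0$ and $d_{ii}=0$, let $s>0$, and let $f(d)=\exp(-s\,d)$. For $i=1,\dots,n$ put $R_i(s)=\sum_{j\neq i} f(d_{ij})$. Let $\mathbf{c}=(c_1,\dots,c_n)\in\{1,\dots,n\}^n$ be a fixed assignment vector containing exactly $n_{\text{self}}=\#\{i: c_i=i\}$ self-links. Suppose the concentration parameter has prior $\alpha\sim\mathrm{Gamma}(a_\alpha,b_\alpha)$ (shape $a_\alpha>0$, rate $b_\alpha>0$) and that, given $\alpha$, the links are independent with $$\Pr(c_i=j\mid \mathbf{D},\alpha,s)=\frac{f(d_{ij})}{\alpha+R_i(s)}\ (j\neq i),\qquad \Pr(c_i=i\mid \mathbf{D},\alpha,s)=\frac{\alpha}{\alpha+R_i(s)},$$ so that the conditional posterior of $\alpha$ is $$p(\alpha\mid \mathbf{c},s)\propto \alpha^{a_\alpha+n_{\text{self}}-1}\exp(-b_\alpha\alpha)\prod_{i=1}^n\frac{1}{\alpha+R_i(s)},\qquad \alpha>0.$$ Then there is a joint distribution of $(\alpha,V_1,\dots,V_n)$ on $(0,\infty)^{n+1}$ whose marginal distribution for $\alpha$ is exactly $p(\alpha\mid\mathbf{c},s)$ and whose full conditional distributions are: (1) given $\alpha$ (and $\mathbf{c},s$), the $V_1,\dots,V_n$ are conditionally independent with $V_i\sim\mathrm{Exponential}(\alpha+R_i(s))$ (rate parametrisation); (2) given $V=(V_1,\dots,V_n)$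 (and $\mathbf{c},s$), $\alpha\sim\mathrm{Gamma}\big(a_\alpha+n_{\text{self}},\ b_\alpha+\sum_{i=1}^n V_i\big)$ (shape, rate). Consequently, the Gibbs sampler alternating updates (1) and (2) targets the exact posterior $p(\alpha\mid\mathbf{c},s)$ in its $\alpha$-marginal.
   Context: This is the distance dependent Chinese Restaurant Process (ddCRP) prior over assignment vectors $\mathbf{c}$: each observation $i$ links to observation $c_i$, with self-link weight $\alpha>0$ and link weight $f(d_{ij})$ to $j\ne i$, normalised by $\alpha+R_i(s)$. Gamma distributions are parametrised by shape and rate, Exponential distributions by rate. *)

theory Defs
  imports "HOL-Probability.Probability"
begin

definition gamma_density :: "real \<Rightarrow> real \<Rightarrow> real \<Rightarrow> real" where
  "gamma_density a b x =
     (if x > 0 then b powr a * x powr (a - 1) * exp (- b * x) / Gamma a else 0)"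

definition ddcrp_f :: "real \<Rightarrow> real \<Rightarrow> real" where
  "ddcrp_f s d = exp (- s * d)"

text \<open>R_i(s) = sum over j /= i of f(d_ij); observations indexed 0..n-1.\<close>
definition ddcrp_R :: "nat \<Rightarrow> (nat \<Rightarrow> nat \<Rightarrow> real) \<Rightarrow> real \<Rightarrow> nat \<Rightarrow> real" where
  "ddcrp_R n D s i = (\<Sum>j\<in>{..<n} - {i}. ddcrp_f s (D i j))"

definition n_self :: "nat \<Rightarrow> (nat \<Rightarrow> nat) \<Rightarrow> nat" where
  "n_self n c = card {i\<in>{..<n}. c i = i}"

definition alpha_post_unnorm ::
  "nat \<Rightarrow> (nat \<Rightarrow> nat \<Rightarrow> real) \<Rightarrow> real \<Rightarrow> (nat \<Rightarrow> nat) \<Rightarrow> real \<Rightarrow> real \<Rightarrow> real \<Rightarrow> real" where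
  "alpha_post_unnorm n D s c a b \<alpha> =
     (if \<alpha> > 0 then \<alpha> powr (a + real (n_self n c) - 1) * exp (- b * \<alpha>)
        * (\<Prod>i<n. 1 / (\<alpha> + ddcrp_R n D s i)) else 0)"

definition alpha_post ::
  "nat \<Rightarrow> (nat \<Rightarrow> nat \<Rightarrow> real) \<Rightarrow> real \<Rightarrow> (nat \<Rightarrow> nat) \<Rightarrow> real \<Rightarrow> real \<Rightarrow> real \<Rightarrow> real" where
  "alpha_post n D s c a b \<alpha> =
     alpha_post_unnorm n D s c a b \<alpha> /
       (\<integral>x. alpha_post_unnorm n D s c a b x \<partial>lborel)"

end

(*
  Data augmentation: given \<alpha>, draw V\<^sub>i ~ Exponential(\<alpha> + R\<^sub>i) independently, so the joint
  density is p(\<alpha>) \<Prod>\<^sub>i (\<alpha> + R\<^sub>i) exp (-(\<alpha> + R\<^sub>i) v\<^sub>i). Integrating out v returns p(\<alpha>),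
  since each exponential density has mass one. For fixed v, the rate factors \<alpha> + R\<^sub>i cancel
  the denominators 1 / (\<alpha> + R\<^sub>i) of p, and what is left is a multiple of the Gamma kernel
  \<alpha> powr (a + n_self - 1) exp (-(b + \<Sum>\<^sub>i v\<^sub>i) \<alpha>). The only analytic input is that p can be
  normalised: its unnormalised density is dominated by a Gamma kernel, because all R\<^sub>i > 0
  once n \<ge> 2, while for n = 1 the self-link factor \<alpha> cancels the factor 1 / \<alpha>.
*)
theory Submission
  imports Defs
begin

definition gamma_kernel :: "real \<Rightarrow> real \<Rightarrow> real \<Rightarrow> real" where
  "gamma_kernel a b x = (if x > 0 then x powr (a - 1) * exp (- b * x) else 0)"

lemma gamma_kernel_nonneg: "0 \<le> gamma_kernel a b x"
  by (simp add: gamma_kernel_def)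

lemma borel_measurable_gamma_kernel [measurable]: "gamma_kernel a b \<in> borel_measurable borel"
  unfolding gamma_kernel_def by measurable

lemma gamma_density_eq_kernel: "gamma_density a b x = b powr a / Gamma a * gamma_kernel a b x"
  by (simp add: gamma_density_def gamma_kernel_def)

lemma gamma_density_eq_0: "\<not> 0 < x \<Longrightarrow> gamma_density a b x = 0"
  by (simp add: gamma_density_def)

lemma borel_measurable_gamma_density [measurable]: "gamma_density a b \<in> borel_measurable borel"
  unfolding gamma_density_def by measurable

lemma gamma_density_nonneg: "0 < a \<Longrightarrow> 0 \<le> gamma_density a b x"
  by (simp add: gamma_density_eq_kernel gamma_kernel_nonneg)

lemma gamma_density_one: "0 \<le> l \<Longrightarrow> 0 < x \<Longrightarrow> gamma_density 1 l x = l * exp (- l * x)"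
  by (simp add: gamma_density_def)

lemma gamma_density_one_eq_exponential_density:
  "0 \<le> l \<Longrightarrow> 0 < x \<Longrightarrow> gamma_density 1 l x = exponential_density l x"
  by (simp add: gamma_density_one exponential_density_def mult.commute)

lemma prod_gamma_density_one_shifted_rates:
  fixes r v :: "nat \<Rightarrow> real"
  assumes "\<forall>i<n. 0 \<le> \<alpha> + r i" and "\<forall>i<n. 0 < v i"
  shows "(\<Prod>i<n. gamma_density 1 (\<alpha> + r i) (v i))
    = (\<Prod>i<n. \<alpha> + r i) * (exp (- \<alpha> * (\<Sum>i<n. v i)) * exp (- (\<Sum>i<n. v i * r i)))"
proof -
  have "(\<Prod>i<n. gamma_density 1 (\<alpha> + r i) (v i)) = (\<Prod>i<n. (\<alpha> + r i) * exp (- (\<alpha> + r i) * v i))"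
    using assms by (intro prod.cong) (simp_all add: gamma_density_one)
  also have "\<dots> = (\<Prod>i<n. \<alpha> + r i) * exp (\<Sum>i<n. - (\<alpha> + r i) * v i)"
    by (simp add: prod.distrib exp_sum)
  also have "(\<Sum>i<n. - (\<alpha> + r i) * v i) = - \<alpha> * (\<Sum>i<n. v i) + - (\<Sum>i<n. v i * r i)"
    by (simp add: sum_distrib_left sum.distrib[symmetric] sum_negf[symmetric] algebra_simps)
  also have "exp \<dots> = exp (- \<alpha> * (\<Sum>i<n. v i)) * exp (- (\<Sum>i<n. v i * r i))"
    by (rule exp_add)
  finally show ?thesis .
qed

lemma nn_integral_gamma_kernel:
  assumes a: "0 < a" and b: "0 < b"
  shows "(\<integral>\<^sup>+x. ennreal (gamma_kernel a b x) \<partial>lborel) = ennreal (Gamma a / b powr a)"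
proof -
  define f where "f t = ennreal (indicator {0..} t * t powr (a - 1) / exp t)" for t :: real
  have [measurable]: "f \<in> borel_measurable borel"
    unfolding f_def by measurable
  have f_scaled: "f (b * x) = ennreal (b powr (a - 1)) * ennreal (gamma_kernel a b x)" for x
    using b by (cases x "0 :: real" rule: linorder_cases)
      (auto simp: f_def gamma_kernel_def indicator_def zero_le_mult_iff powr_mult exp_minus
        field_simps ennreal_mult'[symmetric])
  have "ennreal (Gamma a) = (\<integral>\<^sup>+x. f x \<partial>lborel)"
    unfolding f_def by (rule Gamma_conv_nn_integral_real[OF a])
  also have "\<dots> = ennreal b * (\<integral>\<^sup>+x. f (b * x) \<partial>lborel)"
    using b by (subst nn_integral_real_affine[where c = b and t = 0]) auto
  also have "\<dots> = ennreal b * ennreal (b powr (a - 1))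
      * (\<integral>\<^sup>+x. ennreal (gamma_kernel a b x) \<partial>lborel)"
    by (simp add: f_scaled nn_integral_cmult mult.assoc)
  also have "ennreal b * ennreal (b powr (a - 1)) = ennreal (b powr a)"
    using b by (simp add: ennreal_mult'[symmetric] powr_mult_base)
  finally show ?thesis
    using a b by (simp add: ennreal_divide_eq_top_iff divide_ennreal[symmetric]
      ennreal_mult_divide_eq mult.commute[of "ennreal (b powr a)"])
qed

lemma nn_integral_cmult_gamma_density:
  assumes "0 < a" "0 < b" "0 \<le> C"
  shows "(\<integral>\<^sup>+x. ennreal (C * gamma_density a b x) \<partial>lborel) = ennreal C"
proof -
  have "Gamma a \<noteq> 0"
    using Gamma_real_pos[OF \<open>0 < a\<close>] by linarith
  have "(\<integral>\<^sup>+x. ennreal (C * gamma_density a b x) \<partial>lborel)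
      = ennreal (C * b powr a / Gamma a) * (\<integral>\<^sup>+x. ennreal (gamma_kernel a b x) \<partial>lborel)"
    using assms by (subst nn_integral_cmult[symmetric])
      (auto intro!: nn_integral_cong simp: gamma_density_eq_kernel gamma_kernel_nonneg
        ennreal_mult'[symmetric])
  also have "\<dots> = ennreal C"
    using assms \<open>Gamma a \<noteq> 0\<close> by (simp add: nn_integral_gamma_kernel ennreal_mult'[symmetric])
  finally show ?thesis .
qed

lemma nn_integral_gamma_density:
  "0 < a \<Longrightarrow> 0 < b \<Longrightarrow> (\<integral>\<^sup>+x. ennreal (gamma_density a b x) \<partial>lborel) = 1"
  using nn_integral_cmult_gamma_density[of a b 1] by simp

lemma eq_nn_integral_times_gamma_density:
  assumes a: "0 < a" and b: "0 < b" and C: "0 \<le> C" and f: "\<And>y. f y = C * gamma_kernel a b y"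
  shows "ennreal (f x) = (\<integral>\<^sup>+y. ennreal (f y) \<partial>lborel) * ennreal (gamma_density a b x)"
proof -
  define C' where "C' = C * Gamma a / b powr a"
  have "Gamma a \<noteq> 0"
    using Gamma_real_pos[OF a] by linarith
  then have f': "f y = C' * gamma_density a b y" for y
    using a b by (simp add: f C'_def gamma_density_eq_kernel)
  have "0 \<le> C'"
    using a b C by (simp add: C'_def less_imp_le)
  then show ?thesis
    using a b by (simp add: f' nn_integral_cmult_gamma_density gamma_density_nonneg
      ennreal_mult'[symmetric])
qed

lemma ddcrp_R_nonneg: "0 \<le> ddcrp_R n D s i"
  unfolding ddcrp_R_def ddcrp_f_def by (intro sum_nonneg) simp

lemma ddcrp_R_pos:
  assumes "2 \<le> n"
  shows "0 < ddcrp_R n D s i"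
proof -
  have "(if i = 0 then 1 else 0) \<in> {..<n} - {i}"
    using assms by auto
  then have "{..<n} - {i} \<noteq> {}"
    by blast
  then show ?thesis
    unfolding ddcrp_R_def ddcrp_f_def by (intro sum_pos) auto
qed

lemma alpha_post_unnorm_eq_gamma_kernel:
  "alpha_post_unnorm n D s c a b x
     = gamma_kernel (a + real (n_self n c)) b x * (\<Prod>i<n. 1 / (x + ddcrp_R n D s i))"
  by (simp add: alpha_post_unnorm_def gamma_kernel_def)

lemma alpha_post_unnorm_pos: "0 < x \<Longrightarrow> 0 < alpha_post_unnorm n D s c a b x"
  by (auto simp: alpha_post_unnorm_def ddcrp_R_nonneg add_pos_nonneg intro!: mult_pos_pos prod_pos)

lemma alpha_post_unnorm_nonneg: "0 \<le> alpha_post_unnorm n D s c a b x"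
  by (metis alpha_post_unnorm_def alpha_post_unnorm_pos less_imp_le order_refl)

lemma borel_measurable_alpha_post_unnorm [measurable]:
  "alpha_post_unnorm n D s c a b \<in> borel_measurable borel"
  unfolding alpha_post_unnorm_def by measurable

lemma alpha_post_unnorm_at_most_one_observation:
  assumes "n \<le> 1" and "\<And>i. i < n \<Longrightarrow> c i < n"
  shows "alpha_post_unnorm n D s c a b x = gamma_kernel a b x"
proof (cases n)
  case (Suc m)
  with assms have "n = 1" "c 0 = 0" by auto
  moreover from this have "{i \<in> {..<n}. c i = i} = {0}" by auto
  ultimately show ?thesis
    by (simp add: alpha_post_unnorm_def gamma_kernel_def n_self_def ddcrp_R_def powr_diff
      powr_add lessThan_Suc field_simps)
qed (simp add: alpha_post_unnorm_def gamma_kernel_def n_self_def)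

lemma alpha_post_unnorm_le_gamma_kernel:
  assumes "2 \<le> n"
  shows "alpha_post_unnorm n D s c a b x
    \<le> (\<Prod>i<n. 1 / ddcrp_R n D s i) * gamma_kernel (a + real (n_self n c)) b x"
proof (cases "0 < x")
  case True
  have "(\<Prod>i<n. 1 / (x + ddcrp_R n D s i)) \<le> (\<Prod>i<n. 1 / ddcrp_R n D s i)"
  proof (intro prod_mono conjI)
    fix i
    have "0 < ddcrp_R n D s i"
      using ddcrp_R_pos[OF assms] .
    then show "0 \<le> 1 / (x + ddcrp_R n D s i)" "1 / (x + ddcrp_R n D s i) \<le> 1 / ddcrp_R n D s i"
      using True by (simp_all add: frac_le)
  qed
  then show ?thesis
    unfolding alpha_post_unnorm_eq_gamma_kernel
    by (simp add: mult.commute[of _ "gamma_kernel _ _ _"] gamma_kernel_nonneg mult_left_mono)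
qed (simp add: alpha_post_unnorm_def gamma_kernel_def)

lemma nn_integral_alpha_post_unnorm_finite:
  assumes "0 < a" "0 < b" "\<And>i. i < n \<Longrightarrow> c i < n"
  shows "(\<integral>\<^sup>+x. ennreal (alpha_post_unnorm n D s c a b x) \<partial>lborel) < \<infinity>"
proof (cases "n \<le> 1")
  case True
  then show ?thesis
    using assms by (simp add: alpha_post_unnorm_at_most_one_observation nn_integral_gamma_kernel)
next
  case False
  define M where "M = (\<Prod>i<n. 1 / ddcrp_R n D s i)"
  define k where "k = a + real (n_self n c)"
  have "0 < k"
    using assms by (simp add: k_def)
  have "(\<integral>\<^sup>+x. ennreal (alpha_post_unnorm n D s c a b x) \<partial>lborel)
      \<le> (\<integral>\<^sup>+x. ennreal M * ennreal (gamma_kernel k b x) \<partial>lborel)"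
    using False alpha_post_unnorm_le_gamma_kernel[of n]
    by (intro nn_integral_mono) (simp add: M_def k_def ennreal_mult'[symmetric] ennreal_leI
      ddcrp_R_nonneg prod_nonneg)
  also have "\<dots> = ennreal M * ennreal (Gamma k / b powr k)"
    using \<open>0 < k\<close> assms by (simp add: nn_integral_cmult nn_integral_gamma_kernel)
  also have "\<dots> < \<infinity>"
    by (simp add: ennreal_mult_less_top)
  finally show ?thesis .
qed

lemma nn_integral_alpha_post_unnorm_nonzero:
  "(\<integral>\<^sup>+x. ennreal (alpha_post_unnorm n D s c a b x) \<partial>lborel) \<noteq> 0"
proof
  assume "(\<integral>\<^sup>+x. ennreal (alpha_post_unnorm n D s c a b x) \<partial>lborel) = 0"
  then have "AE x in lborel. ennreal (alpha_post_unnorm n D s c a b x) = 0"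
    by (subst (asm) nn_integral_0_iff_AE) auto
  then have "AE x in lborel. indicator {0<..1::real} x = (0::ennreal)"
  proof eventually_elim
    fix x :: real
    assume "ennreal (alpha_post_unnorm n D s c a b x) = 0"
    then have "\<not> 0 < x"
      using alpha_post_unnorm_pos[of x n D s c a b] by auto
    then show "indicator {0<..1::real} x = (0::ennreal)"
      by simp
  qed
  then have "(\<integral>\<^sup>+x. indicator {0<..1::real} x \<partial>lborel) = (0::ennreal)"
    by (subst nn_integral_0_iff_AE) auto
  then show False
    by simp
qed

lemma nn_integral_divide_integral:
  fixes f :: "'a \<Rightarrow> real"
  assumes [measurable]: "f \<in> borel_measurable M" and nonneg: "\<And>x. 0 \<le> f x"
    and nonzero: "(\<integral>\<^sup>+x. f x \<partial>M) \<noteq> 0" and finite: "(\<integral>\<^sup>+x. f x \<partial>M) < \<infinity>"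
  shows "(\<integral>\<^sup>+x. ennreal (f x / integral\<^sup>L M f) \<partial>M) = 1"
proof -
  have total: "(\<integral>\<^sup>+x. f x \<partial>M) = ennreal (integral\<^sup>L M f)"
    using nonneg finite by (intro nn_integral_eq_integral integrableI_nonneg) auto
  then have "0 < integral\<^sup>L M f"
    using nonzero nonneg by (simp add: integral_nonneg less_le)
  then have "(\<integral>\<^sup>+x. ennreal (f x / integral\<^sup>L M f) \<partial>M)
      = (\<integral>\<^sup>+x. f x \<partial>M) * ennreal (1 / integral\<^sup>L M f)"
    using nonneg by (subst nn_integral_multc[symmetric])
      (auto intro!: nn_integral_cong simp: ennreal_mult'[symmetric])
  also have "\<dots> = 1"
    using \<open>0 < integral\<^sup>L M f\<close> by (simp add: total ennreal_mult'[symmetric])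
  finally show ?thesis .
qed

lemma alpha_post_nonneg: "0 \<le> alpha_post n D s c a b x"
  unfolding alpha_post_def
  by (intro divide_nonneg_nonneg alpha_post_unnorm_nonneg Bochner_Integration.integral_nonneg)

lemma alpha_post_eq_0: "\<not> 0 < x \<Longrightarrow> alpha_post n D s c a b x = 0"
  by (simp add: alpha_post_def alpha_post_unnorm_def)

lemma borel_measurable_alpha_post [measurable]: "alpha_post n D s c a b \<in> borel_measurable borel"
  unfolding alpha_post_def by measurable

lemma nn_integral_alpha_post:
  assumes "0 < a" "0 < b" "\<And>i. i < n \<Longrightarrow> c i < n"
  shows "(\<integral>\<^sup>+x. ennreal (alpha_post n D s c a b x) \<partial>lborel) = 1"
  unfolding alpha_post_def
  using nn_integral_alpha_post_unnorm_finite[OF assms]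
  by (intro nn_integral_divide_integral alpha_post_unnorm_nonneg
    nn_integral_alpha_post_unnorm_nonzero) auto

text \<open>The Exponential(\<open>\<lambda>\<close>) factors are written as Gamma(1, \<open>\<lambda>\<close>) densities: unlike
  \<^const>\<open>exponential_density\<close>, these vanish at \<open>v\<^sub>i = 0\<close>, so the joint density lives on
  \<open>(0, \<infinity>)\<^sup>n\<^sup>+\<^sup>1\<close>.\<close>
definition ddcrp_augmented_density ::
  "nat \<Rightarrow> (nat \<Rightarrow> nat \<Rightarrow> real) \<Rightarrow> real \<Rightarrow> (nat \<Rightarrow> nat) \<Rightarrow> real \<Rightarrow> real \<Rightarrow>
    real \<times> (nat \<Rightarrow> real) \<Rightarrow> real" where
  "ddcrp_augmented_density n D s c a b z =
     alpha_post n D s c a b (fst z) * (\<Prod>i<n. gamma_density 1 (fst z + ddcrp_R n D s i) (snd z i))"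

lemma borel_measurable_ddcrp_augmented_density [measurable]:
  "ddcrp_augmented_density n D s c a b
     \<in> borel_measurable (lborel \<Otimes>\<^sub>M PiM {..<n} (\<lambda>_. lborel))"
  unfolding ddcrp_augmented_density_def gamma_density_def by measurable

lemma ddcrp_augmented_density_nonneg: "0 \<le> ddcrp_augmented_density n D s c a b z"
  unfolding ddcrp_augmented_density_def
  by (intro mult_nonneg_nonneg alpha_post_nonneg prod_nonneg gamma_density_nonneg) simp

lemma ddcrp_augmented_density_nonzero:
  assumes "ddcrp_augmented_density n D s c a b (\<alpha>, v) \<noteq> 0"
  shows "0 < \<alpha> \<and> (\<forall>i<n. 0 < v i)"
proof -
  have "alpha_post n D s c a b \<alpha> \<noteq> 0" "\<forall>i<n. gamma_density 1 (\<alpha> + ddcrp_R n D s i) (v i) \<noteq> 0"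
    using assms by (simp_all add: ddcrp_augmented_density_def)
  then show ?thesis
    using alpha_post_eq_0 gamma_density_eq_0 by metis
qed

lemma ddcrp_augmented_density_eq_exponential_density:
  "0 < \<alpha> \<Longrightarrow> (\<forall>i<n. 0 < v i) \<Longrightarrow> ddcrp_augmented_density n D s c a b (\<alpha>, v)
     = alpha_post n D s c a b \<alpha> * (\<Prod>i<n. exponential_density (\<alpha> + ddcrp_R n D s i) (v i))"
  unfolding ddcrp_augmented_density_def
  by (auto intro!: prod.cong gamma_density_one_eq_exponential_density add_nonneg_nonneg
    ddcrp_R_nonneg)

lemma nn_integral_ddcrp_augmented_density_snd:
  "(\<integral>\<^sup>+v. ennreal (ddcrp_augmented_density n D s c a b (\<alpha>, v)) \<partial>PiM {..<n} (\<lambda>_. lborel))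
     = ennreal (alpha_post n D s c a b \<alpha>)"
proof (cases "0 < \<alpha>")
  case True
  interpret product_sigma_finite "\<lambda>_::nat. lborel :: real measure"
    by standard
  have rate: "0 < \<alpha> + ddcrp_R n D s i" for i
    using True ddcrp_R_nonneg by (simp add: add_pos_nonneg)
  have "(\<integral>\<^sup>+v. ennreal (ddcrp_augmented_density n D s c a b (\<alpha>, v)) \<partial>PiM {..<n} (\<lambda>_. lborel))
      = ennreal (alpha_post n D s c a b \<alpha>) *
        (\<integral>\<^sup>+v. (\<Prod>i<n. ennreal (gamma_density 1 (\<alpha> + ddcrp_R n D s i) (v i)))
          \<partial>PiM {..<n} (\<lambda>_. lborel))"
    unfolding ddcrp_augmented_density_def
    by (subst nn_integral_cmult[symmetric]) (auto intro!: nn_integral_cong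
      simp: prod_ennreal ennreal_mult'[symmetric] alpha_post_nonneg prod_nonneg
        gamma_density_nonneg)
  also have "\<dots> = ennreal (alpha_post n D s c a b \<alpha>) *
      (\<Prod>i<n. \<integral>\<^sup>+y. ennreal (gamma_density 1 (\<alpha> + ddcrp_R n D s i) y) \<partial>lborel)"
    by (subst product_nn_integral_prod) auto
  also have "\<dots> = ennreal (alpha_post n D s c a b \<alpha>)"
    using rate by (simp add: nn_integral_gamma_density)
  finally show ?thesis .
qed (simp add: ddcrp_augmented_density_def alpha_post_eq_0)

lemma prob_space_ddcrp_augmented_density:
  assumes "0 < a" "0 < b" "\<And>i. i < n \<Longrightarrow> c i < n"
  shows "prob_space (density (lborel \<Otimes>\<^sub>M PiM {..<n} (\<lambda>_. lborel))
    (\<lambda>z. ennreal (ddcrp_augmented_density n D s c a b z)))"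
proof (rule prob_spaceI)
  have [measurable]: "(\<lambda>z. ennreal (ddcrp_augmented_density n D s c a b z))
      \<in> borel_measurable (lborel \<Otimes>\<^sub>M PiM {..<n} (\<lambda>_. lborel))"
    by measurable
  interpret product_sigma_finite "\<lambda>_::nat. lborel :: real measure"
    by standard
  interpret V: sigma_finite_measure "PiM {..<n} (\<lambda>_. lborel :: real measure)"
    by (rule sigma_finite) simp
  have "(\<integral>\<^sup>+z. ddcrp_augmented_density n D s c a b z \<partial>(lborel \<Otimes>\<^sub>M PiM {..<n} (\<lambda>_. lborel)))
      = (\<integral>\<^sup>+\<alpha>. \<integral>\<^sup>+v. ddcrp_augmented_density n D s c a b (\<alpha>, v) \<partial>PiM {..<n} (\<lambda>_. lborel) \<partial>lborel)"
    by (rule V.nn_integral_fst[symmetric]) measurable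
  also have "\<dots> = 1"
    using assms by (simp add: nn_integral_ddcrp_augmented_density_snd nn_integral_alpha_post)
  finally show "emeasure (density (lborel \<Otimes>\<^sub>M PiM {..<n} (\<lambda>_. lborel))
      (\<lambda>z. ennreal (ddcrp_augmented_density n D s c a b z)))
      (space (density (lborel \<Otimes>\<^sub>M PiM {..<n} (\<lambda>_. lborel))
      (\<lambda>z. ennreal (ddcrp_augmented_density n D s c a b z)))) = 1"
    unfolding space_density by (subst emeasure_density[OF _ sets.top]) simp_all
qed

lemma ddcrp_augmented_density_eq_gamma_kernel:
  assumes v: "\<forall>i<n. 0 < v i"
  shows "ddcrp_augmented_density n D s c a b (\<alpha>, v)
    = exp (- (\<Sum>i<n. v i * ddcrp_R n D s i)) / (\<integral>x. alpha_post_unnorm n D s c a b x \<partial>lborel)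
      * gamma_kernel (a + real (n_self n c)) (b + (\<Sum>i<n. v i)) \<alpha>"
proof (cases "0 < \<alpha>")
  case True
  define R where "R = ddcrp_R n D s"
  have rate: "0 < \<alpha> + R i" for i
    using True ddcrp_R_nonneg by (simp add: R_def add_pos_nonneg)
  have exponentials: "(\<Prod>i<n. gamma_density 1 (\<alpha> + R i) (v i))
      = (\<Prod>i<n. \<alpha> + R i) * (exp (- \<alpha> * (\<Sum>i<n. v i)) * exp (- (\<Sum>i<n. v i * R i)))"
    using rate v by (intro prod_gamma_density_one_shifted_rates) (simp_all add: less_imp_le)
  define Z where "Z = (\<integral>x. alpha_post_unnorm n D s c a b x \<partial>lborel)"
  define k where "k = a + real (n_self n c)"
  have "ddcrp_augmented_density n D s c a b (\<alpha>, v)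
      = \<alpha> powr (k - 1) * exp (- b * \<alpha>) * (\<Prod>i<n. 1 / (\<alpha> + R i)) / Z
        * (\<Prod>i<n. gamma_density 1 (\<alpha> + R i) (v i))"
    using True by (simp add: ddcrp_augmented_density_def alpha_post_def alpha_post_unnorm_def
      R_def Z_def k_def)
  also have "\<dots> = \<alpha> powr (k - 1) * (exp (- b * \<alpha>) * exp (- \<alpha> * (\<Sum>i<n. v i)))
      * ((\<Prod>i<n. 1 / (\<alpha> + R i)) * (\<Prod>i<n. \<alpha> + R i)) * exp (- (\<Sum>i<n. v i * R i)) / Z"
    unfolding exponentials by (simp add: divide_inverse ac_simps)
  also have "(\<Prod>i<n. 1 / (\<alpha> + R i)) * (\<Prod>i<n. \<alpha> + R i) = 1"
    using rate by (simp add: prod.distrib[symmetric] less_imp_neq[symmetric])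
  also have "exp (- b * \<alpha>) * exp (- \<alpha> * (\<Sum>i<n. v i)) = exp (- (b + (\<Sum>i<n. v i)) * \<alpha>)"
    by (simp add: exp_add[symmetric] algebra_simps)
  finally show ?thesis
    using True by (simp add: gamma_kernel_def R_def Z_def k_def)
qed (simp add: ddcrp_augmented_density_def alpha_post_eq_0 gamma_kernel_def)

lemma ddcrp_augmented_density_gamma_conditional:
  assumes "0 < a" "0 < b" "\<forall>i<n. 0 < v i"
  shows "ennreal (ddcrp_augmented_density n D s c a b (\<alpha>, v))
    = (\<integral>\<^sup>+\<beta>. ennreal (ddcrp_augmented_density n D s c a b (\<beta>, v)) \<partial>lborel)
      * ennreal (gamma_density (a + real (n_self n c)) (b + (\<Sum>i<n. v i)) \<alpha>)"
proof (rule eq_nn_integral_times_gamma_density)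
  show "0 < a + real (n_self n c)"
    using \<open>0 < a\<close> by simp
  show "0 < b + (\<Sum>i<n. v i)"
    using assms by (intro add_pos_nonneg sum_nonneg) (simp_all add: less_imp_le)
  show "0 \<le> exp (- (\<Sum>i<n. v i * ddcrp_R n D s i)) / (\<integral>x. alpha_post_unnorm n D s c a b x \<partial>lborel)"
    by (simp add: Bochner_Integration.integral_nonneg alpha_post_unnorm_nonneg)
qed (rule ddcrp_augmented_density_eq_gamma_kernel[OF \<open>\<forall>i<n. 0 < v i\<close>])

theorem proposition1:
  fixes n :: nat and D :: "nat \<Rightarrow> nat \<Rightarrow> real" and s a b :: real and c :: "nat \<Rightarrow> nat"
  assumes "n \<ge> 1"
    and "\<And>i j. i < n \<Longrightarrow> j < n \<Longrightarrow> D i j = D j i"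
    and "\<And>i j. i < n \<Longrightarrow> j < n \<Longrightarrow> D i j \<ge> 0"
    and "\<And>i. i < n \<Longrightarrow> D i i = 0"
    and "s > 0"
    and "\<And>i. i < n \<Longrightarrow> c i < n"
    and "a > 0" and "b > 0"
  defines "V \<equiv> PiM {..<n} (\<lambda>_. lborel :: real measure)"
  shows "\<exists>h :: real \<times> (nat \<Rightarrow> real) \<Rightarrow> real.
     h \<in> borel_measurable (lborel \<Otimes>\<^sub>M V) \<and>
     (\<forall>z. 0 \<le> h z) \<and>
     (\<forall>\<alpha> v. h (\<alpha>, v) \<noteq> 0 \<longrightarrow> \<alpha> > 0 \<and> (\<forall>i<n. v i > 0)) \<and>
     prob_space (density (lborel \<Otimes>\<^sub>M V) (\<lambda>z. ennreal (h z))) \<and>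
     (\<forall>\<alpha>. (\<integral>\<^sup>+ v. ennreal (h (\<alpha>, v)) \<partial>V) = ennreal (alpha_post n D s c a b \<alpha>)) \<and>
     (\<forall>\<alpha> v. \<alpha> > 0 \<longrightarrow> v \<in> space V \<longrightarrow> (\<forall>i<n. v i > 0) \<longrightarrow>
        h (\<alpha>, v) = alpha_post n D s c a b \<alpha> *
          (\<Prod>i<n. exponential_density (\<alpha> + ddcrp_R n D s i) (v i))) \<and>
     (\<forall>\<alpha> v. v \<in> space V \<longrightarrow> (\<forall>i<n. v i > 0) \<longrightarrow>
        ennreal (h (\<alpha>, v)) = (\<integral>\<^sup>+ \<beta>. ennreal (h (\<beta>, v)) \<partial>lborel) *
          ennreal (gamma_density (a + real (n_self n c)) (b + (\<Sum>i<n. v i)) \<alpha>))"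
proof -
  show ?thesis
    unfolding V_def
  proof (intro exI[of _ "ddcrp_augmented_density n D s c a b"] conjI allI impI)
    show "prob_space (density (lborel \<Otimes>\<^sub>M PiM {..<n} (\<lambda>_. lborel))
        (\<lambda>z. ennreal (ddcrp_augmented_density n D s c a b z)))"
      using \<open>0 < a\<close> \<open>0 < b\<close> \<open>\<And>i. i < n \<Longrightarrow> c i < n\<close>
      by (rule prob_space_ddcrp_augmented_density)
    show "ennreal (ddcrp_augmented_density n D s c a b (\<alpha>, v))
      = (\<integral>\<^sup>+\<beta>. ennreal (ddcrp_augmented_density n D s c a b (\<beta>, v)) \<partial>lborel)
        * ennreal (gamma_density (a + real (n_self n c)) (b + (\<Sum>i<n. v i)) \<alpha>)"
      if "\<forall>i<n. 0 < v i" for \<alpha> v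
      using \<open>0 < a\<close> \<open>0 < b\<close> that by (rule ddcrp_augmented_density_gamma_conditional)
  qed (auto dest: ddcrp_augmented_density_nonzero simp: ddcrp_augmented_density_nonneg
    nn_integral_ddcrp_augmented_density_snd ddcrp_augmented_density_eq_exponential_density)
qed

end
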